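(* Let $n,r\ge 1$ and let $\mathcal{A}\subseteq \mathcal{I}^{(r)}(K_n^* )$ be an intersecting family. Then there exists an intersecting family $\mathcal{B}\subseteq\mathcal{I}^{(r)}(K_n^* )$ such that (1) $|\mathcal{A}|=|\mathcal{B}|$, and (2) for all $B_1,B_2\in\mathcal{B}$, $B_1\cap B_2\not\subseteq \{x_1,\dots,x_n\}=V(K_n)$.
   Context: $\mathcal{I}^{(r)}(G)$ denotes the family of all independent $r$-sets (sets of $r$ pairwise non-adjacent vertices) of a graph $G$. A family of sets is intersecting if every two of its members have nonempty intersection. For a graph $G$ with vertices $x_1,\dots,x_n$, the pendant graph $G^*$ has vertex set $\{x_1,\dots,x_n\}\sqcup\{p_1,\dots,p_n\}$ and edge set $E(G)\sqcup\{x_1p_1,\dots,x_np_n\}$; $K_n^*$ is the pendant graph of the complete graph $K_n$ on $x_1,\dots,x_n$. *)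

theory Defs
  imports Main
begin

text \<open>Vertices of the pendant graph K_n^*: core vertices X i (= x_(i+1)) and
pendant vertices P i (= p_(i+1)), for i < n (0-indexed).\<close>
datatype pvert = X nat | P nat

definition pendant_vertices :: "nat \<Rightarrow> pvert set" where
  "pendant_vertices n = X ` {..<n} \<union> P ` {..<n}"

fun Kstar_adj :: "pvert \<Rightarrow> pvert \<Rightarrow> bool" where
  "Kstar_adj (X i) (X j) = (i \<noteq> j)"
| "Kstar_adj (X i) (P j) = (i = j)"
| "Kstar_adj (P i) (X j) = (i = j)"
| "Kstar_adj (P i) (P j) = False"

definition indep_rsets :: "'a set \<Rightarrow> ('a \<Rightarrow> 'a \<Rightarrow> bool) \<Rightarrow> nat \<Rightarrow> 'a set set" where
  "indep_rsets V E r = {S. S \<subseteq> V \<and> card S = r \<and> finite S \<and> (\<forall>u\<in>S. \<forall>v\<in>S. \<not> E u v)}"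

definition intersecting :: "'a set set \<Rightarrow> bool" where
  "intersecting F \<longleftrightarrow> (\<forall>A\<in>F. \<forall>B\<in>F. A \<inter> B \<noteq> {})"

end

theory Submission
  imports Defs
begin

text \<open>Apply, for each core vertex \<open>x\<^sub>i\<close> in turn, the compression that replaces \<open>x\<^sub>i\<close> by its
pendant neighbour \<open>p\<^sub>i\<close> whenever the result is not already in the family. Compressions keep
the size of the family and its intersecting property, and they map independent sets of
\<open>K\<^sub>n\<^sup>*\<close> to independent sets. After compressing at \<open>x\<^sub>i\<close> no two members meet exactly in
\<open>{x\<^sub>i}\<close>: otherwise the compressed copy of one of them would be a member missing the other.
Later compressions at \<open>x\<^sub>j\<close> do not destroy this, since an independent set contains at
most one core vertex. Finally, two members of an intersecting family of independent sets
meeting inside the core meet in a single core vertex, which has now been excluded.\<close>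

definition move :: "'a \<Rightarrow> 'a \<Rightarrow> 'a set \<Rightarrow> 'a set" where
  "move x y S = insert y (S - {x})"

definition compress :: "'a \<Rightarrow> 'a \<Rightarrow> 'a set set \<Rightarrow> 'a set \<Rightarrow> 'a set" where
  "compress x y F S = (if x \<in> S \<and> y \<notin> S \<and> move x y S \<notin> F then move x y S else S)"

definition compression :: "'a \<Rightarrow> 'a \<Rightarrow> 'a set set \<Rightarrow> 'a set set" where
  "compression x y F = compress x y F ` F"

definition no_singleton_meet :: "'a \<Rightarrow> 'a set set \<Rightarrow> bool" where
  "no_singleton_meet z F \<longleftrightarrow> (\<forall>S\<in>F. \<forall>T\<in>F. S \<inter> T \<noteq> {z})"

lemma compress_cases:
  obtains "compress x y F S = move x y S" "x \<in> S" "y \<notin> S" "move x y S \<notin> F"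
  | "compress x y F S = S" "x \<in> S \<longrightarrow> y \<notin> S \<longrightarrow> move x y S \<in> F"
  unfolding compress_def by (cases "x \<in> S \<and> y \<notin> S \<and> move x y S \<notin> F") auto

lemma move_inj:
  assumes "move x y S = move x y T" "x \<in> S" "y \<notin> S" "x \<in> T" "y \<notin> T"
  shows "S = T"
proof -
  have "S - {x} = T - {x}"
    using assms(1,3,5) unfolding move_def by (metis Diff_iff insert_ident)
  then show ?thesis using assms(2,4) by (metis insert_Diff)
qed

lemma inj_on_compress: "inj_on (compress x y F) F"
proof
  fix S T assume S: "S \<in> F" and T: "T \<in> F" and eq: "compress x y F S = compress x y F T"
  show "S = T"
    using S T eq move_inj[of x y S T]
    by (cases rule: compress_cases[of x y F S]; cases rule: compress_cases[of x y F T]) auto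
qed

lemma card_compression: "card (compression x y F) = card F"
  unfolding compression_def by (rule card_image[OF inj_on_compress])

lemma compression_subset:
  assumes "F \<subseteq> G" and "\<And>S. S \<in> G \<Longrightarrow> x \<in> S \<Longrightarrow> y \<notin> S \<Longrightarrow> move x y S \<in> G"
  shows "compression x y F \<subseteq> G"
proof
  fix A assume "A \<in> compression x y F"
  then obtain S where "S \<in> F" "A = compress x y F S" unfolding compression_def by auto
  then show "A \<in> G" using assms by (cases rule: compress_cases[of x y F S]) auto
qed

text \<open>If the moved copy of \<open>U\<close> missed \<open>W\<close>, then \<open>U \<inter> W = {x}\<close>, so the moved copy
of \<open>W\<close> lies in the family and misses \<open>U\<close>.\<close>
lemma move_meets_uncompressed:
  assumes "intersecting F" "U \<in> F" "W \<in> F" "x \<in> U" "y \<notin> U"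
    and "x \<in> W \<longrightarrow> y \<notin> W \<longrightarrow> move x y W \<in> F"
  shows "move x y U \<inter> W \<noteq> {}"
proof
  assume empty: "move x y U \<inter> W = {}"
  have "U \<inter> W \<noteq> {}" using assms(1-3) unfolding intersecting_def by blast
  with empty have UW: "U \<inter> W = {x}" and "y \<notin> W" unfolding move_def by blast+
  then have "move x y W \<in> F" using assms(6) by blast
  moreover have "move x y W \<inter> U = {}" using UW \<open>y \<notin> U\<close> unfolding move_def by blast
  ultimately show False using assms(1,2) unfolding intersecting_def by blast
qed

lemma intersecting_compression:
  assumes "intersecting F"
  shows "intersecting (compression x y F)"
  unfolding intersecting_def
proof (intro ballI)
  fix A B assume "A \<in> compression x y F" "B \<in> compression x y F"
  then obtain S T where S: "S \<in> F" "A = compress x y F S" and T: "T \<in> F" "B = compress x y F T"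
    unfolding compression_def by auto
  have "S \<inter> T \<noteq> {}" using assms S T unfolding intersecting_def by blast
  then show "A \<inter> B \<noteq> {}"
    using S T move_meets_uncompressed[OF assms, of S T x y] move_meets_uncompressed[OF assms, of T S x y]
    by (cases rule: compress_cases[of x y F S]; cases rule: compress_cases[of x y F T])
       (auto simp: move_def Int_commute)
qed

lemma no_singleton_meet_compression:
  assumes "intersecting F" and "\<forall>S\<in>F. x \<in> S \<longrightarrow> y \<notin> S"
  shows "no_singleton_meet x (compression x y F)"
  unfolding no_singleton_meet_def
proof (intro ballI notI)
  fix A B assume A: "A \<in> compression x y F" and B: "B \<in> compression x y F" and AB: "A \<inter> B = {x}"
  obtain S T where S: "S \<in> F" "A = compress x y F S" and T: "T \<in> F" "B = compress x y F T"
    using A B unfolding compression_def by auto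
  have "compress x y F U = U" if "x \<in> compress x y F U" for U
    using that by (cases rule: compress_cases[of x y F U]) (auto simp: move_def)
  with AB S T have "A = S" "B = T" by blast+
  with AB S T assms(2) have "move x y A \<in> F" "y \<notin> B"
    by (cases rule: compress_cases[of x y F S]; auto)+
  moreover have "compress x y F (move x y A) = move x y A" unfolding compress_def move_def by auto
  ultimately have "move x y A \<in> compression x y F" unfolding compression_def by force
  then have "move x y A \<inter> B \<noteq> {}"
    using intersecting_compression[OF assms(1)] B unfolding intersecting_def by blast
  with AB \<open>y \<notin> B\<close> show False unfolding move_def by blast
qed

lemma no_singleton_meet_compression_preserved:
  assumes "no_singleton_meet z F" and "z \<noteq> y" and "\<forall>S\<in>F. x \<in> S \<longrightarrow> z \<notin> S"
  shows "no_singleton_meet z (compression x y F)"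
proof -
  have unchanged: "compress x y F S = S" if "S \<in> F" "z \<in> compress x y F S" for S
    using that assms(2,3) by (cases rule: compress_cases[of x y F S]) (auto simp: move_def)
  show ?thesis
    unfolding no_singleton_meet_def
  proof (intro ballI notI)
    fix A B assume "A \<in> compression x y F" "B \<in> compression x y F" and AB: "A \<inter> B = {z}"
    then obtain S T where S: "S \<in> F" "A = compress x y F S" and T: "T \<in> F" "B = compress x y F T"
      unfolding compression_def by auto
    with AB unchanged have "S \<inter> T = {z}" by (metis insertI1 IntD1 IntD2)
    with S T assms(1) show False unfolding no_singleton_meet_def by blast
  qed
qed

abbreviation indep_Kstar :: "nat \<Rightarrow> nat \<Rightarrow> pvert set set" where
  "indep_Kstar n r \<equiv> indep_rsets (pendant_vertices n) Kstar_adj r"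

lemma indep_Kstar_core_unique:
  "S \<in> indep_Kstar n r \<Longrightarrow> X i \<in> S \<Longrightarrow> X j \<in> S \<Longrightarrow> i = j"
  unfolding indep_rsets_def by force

lemma indep_Kstar_core_not_pendant:
  "S \<in> indep_Kstar n r \<Longrightarrow> X i \<in> S \<Longrightarrow> P i \<notin> S"
  unfolding indep_rsets_def by force

lemma indep_Kstar_move:
  assumes S: "S \<in> indep_Kstar n r" and "X i \<in> S"
  shows "move (X i) (P i) S \<in> indep_Kstar n r"
proof -
  let ?M = "move (X i) (P i) S"
  have fin: "finite S" and sub: "S \<subseteq> pendant_vertices n"
    and indep: "\<forall>u\<in>S. \<forall>v\<in>S. \<not> Kstar_adj u v"
    using S unfolding indep_rsets_def by auto
  have "P i \<notin> S" using indep_Kstar_core_not_pendant[OF S \<open>X i \<in> S\<close>] .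
  have "i < n" using sub \<open>X i \<in> S\<close> unfolding pendant_vertices_def by auto
  then have "?M \<subseteq> pendant_vertices n"
    using sub unfolding move_def pendant_vertices_def by auto
  moreover have "card ?M = card S"
    using fin \<open>P i \<notin> S\<close> card_Suc_Diff1[OF fin \<open>X i \<in> S\<close>] unfolding move_def by simp
  moreover have "\<not> Kstar_adj u v" if "u \<in> ?M" "v \<in> ?M" for u v
  proof -
    have "X i \<notin> ?M" unfolding move_def by simp
    then have "\<not> Kstar_adj (P i) w \<and> \<not> Kstar_adj w (P i)" if "w \<in> ?M" for w
      using that by (cases w) auto
    then show ?thesis using that indep unfolding move_def by blast
  qed
  moreover have "finite ?M" using fin unfolding move_def by simp
  ultimately show ?thesis using S unfolding indep_rsets_def by auto
qed

lemma indep_Kstar_meet_in_core: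
  assumes "S \<in> indep_Kstar n r" "S \<inter> T \<noteq> {}" "S \<inter> T \<subseteq> X ` {..<n}"
  shows "\<exists>i<n. S \<inter> T = {X i}"
proof -
  obtain i where i: "i < n" "X i \<in> S \<inter> T" using assms(2,3) by blast
  have "v = X i" if "v \<in> S \<inter> T" for v
  proof -
    obtain j where "v = X j" using \<open>v \<in> S \<inter> T\<close> assms(3) by blast
    then show ?thesis using that i indep_Kstar_core_unique[OF assms(1)] by blast
  qed
  with i show ?thesis by blast
qed

fun compress_core :: "nat \<Rightarrow> pvert set set \<Rightarrow> pvert set set" where
  "compress_core 0 F = F"
| "compress_core (Suc k) F = compression (X k) (P k) (compress_core k F)"

lemma compress_core_subset:
  "F \<subseteq> indep_Kstar n r \<Longrightarrow> compress_core k F \<subseteq> indep_Kstar n r"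
  by (induction k) (simp_all add: compression_subset indep_Kstar_move)

lemma card_compress_core: "card (compress_core k F) = card F"
  by (induction k) (simp_all add: card_compression)

lemma intersecting_compress_core: "intersecting F \<Longrightarrow> intersecting (compress_core k F)"
  by (induction k) (simp_all add: intersecting_compression)

lemma no_singleton_meet_compress_core:
  assumes "F \<subseteq> indep_Kstar n r" "intersecting F" "j < k"
  shows "no_singleton_meet (X j) (compress_core k F)"
  using \<open>j < k\<close>
proof (induction k)
  case (Suc k)
  have indep: "compress_core k F \<subseteq> indep_Kstar n r" using compress_core_subset[OF assms(1)] .
  show ?case
  proof (cases "j = k")
    case True
    have "\<forall>S\<in>compress_core k F. X k \<in> S \<longrightarrow> P k \<notin> S"
      using indep indep_Kstar_core_not_pendant by blast
    then show ?thesis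
      using True no_singleton_meet_compression[OF intersecting_compress_core[OF assms(2)]] by simp
  next
    case False
    then have "no_singleton_meet (X j) (compress_core k F)" using Suc by simp
    moreover have "\<forall>S\<in>compress_core k F. X k \<in> S \<longrightarrow> X j \<notin> S"
      using indep indep_Kstar_core_unique False by blast
    ultimately show ?thesis by (simp add: no_singleton_meet_compression_preserved)
  qed
qed simp

theorem lemma3:
  fixes n r :: nat and \<A> :: "pvert set set"
  assumes "n \<ge> 1" and "r \<ge> 1"
    and "\<A> \<subseteq> indep_rsets (pendant_vertices n) Kstar_adj r"
    and "intersecting \<A>"
  shows "\<exists>\<B>. \<B> \<subseteq> indep_rsets (pendant_vertices n) Kstar_adj r \<and> intersecting \<B>
           \<and> card \<A> = card \<B>
           \<and> (\<forall>B1\<in>\<B>. \<forall>B2\<in>\<B>. \<not> (B1 \<inter> B2 \<subseteq> X ` {..<n}))"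
proof (intro exI conjI ballI)
  let ?B = "compress_core n \<A>"
  show sub: "?B \<subseteq> indep_Kstar n r" using compress_core_subset[OF assms(3)] .
  show int: "intersecting ?B" using intersecting_compress_core[OF assms(4)] .
  show "card \<A> = card ?B" by (simp add: card_compress_core)
  fix B1 B2 assume B: "B1 \<in> ?B" "B2 \<in> ?B"
  show "\<not> B1 \<inter> B2 \<subseteq> X ` {..<n}"
  proof
    assume core: "B1 \<inter> B2 \<subseteq> X ` {..<n}"
    have "B1 \<in> indep_Kstar n r" using sub B(1) ..
    moreover have "B1 \<inter> B2 \<noteq> {}" using int B unfolding intersecting_def by blast
    ultimately obtain i where "i < n" "B1 \<inter> B2 = {X i}"
      using indep_Kstar_meet_in_core core by blast
    moreover have "no_singleton_meet (X i) ?B" if "i < n" for i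
      using no_singleton_meet_compress_core[OF assms(3,4) that] .
    ultimately show False using B unfolding no_singleton_meet_def by blast
  qed
qed

end
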